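(* Let $d\geq 2$ and let $\mathsf{K}$ be a neighborly $d$-sphere obtained from the boundary complex of the cyclic polytope $C_{d+1}(n)$ by applying one single element extension, which adds a new vertex $w$. Then $\mathcal{F}(\mathsf{K})$ is $2$-colorable.
   Context: $C_{d+1}(n)$ is the cyclic $(d+1)$-polytope on $n$ vertices labelled $1,\dots,n$ along the moment curve; its facets are the $(d+1)$-subsets $f\subseteq[n]$ such that for all $i<j$ not in $f$, $|\{k\in f:i<k<j\}|$ is even. A simplicial complex on vertex set $V$ is $k$-neighborly if every $k$-subset of $V$ is a face; a neighborly $d$-sphere is a simplicial $d$-sphere that is $\lfloor (d+1)/2\rfloor$-neighborly. A PL $d$-ball $\mathsf{B}$ is $k$-stacked if every face of dimension at most $d-k-1$ lies in its boundary $\partial\mathsf{B}$. Single element extension: given a neighborly PL $d$-sphere $\mathsf{K}'$ on $V$ and a subcomplex $\mathsf{B}\subseteq\mathsf{K}'$ which is a PL $d$-ball that is $(\lfloor (d+1)/2\rfloor-1)$-neighborly with respect to $V$ and $(\lfloor (d+1)/2\rfloor-1)$-stacked, and a new vertex $w\notin V$, the result is $(\mathsf{K}'\setminus\mathsf{B})\cup(\partial\mathsf{B}*\{\emptyset,\{w\}\})$, where $*$ is the join $\mathcal{A}*\mathcal{B}=\{a\cup b: a\in\mathcal{A},b\in\mathcal{B}\}$. $\mathcal{F}(\mathsf{K})$ is the facet hypergraph; $2$-colorable means a $2$-coloring of vertices with no monochromatic facet. *)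

theory Defs
  imports Main
begin

text \<open>Abstract simplicial complexes are represented by their sets of faces
  (including the empty face).\<close>

definition simplicial_complex :: "'a set set \<Rightarrow> bool" where
  "simplicial_complex K \<longleftrightarrow> finite K \<and> (\<forall>\<sigma>\<in>K. finite \<sigma>) \<and> (\<forall>\<sigma>\<in>K. \<forall>\<tau>. \<tau> \<subseteq> \<sigma> \<longrightarrow> \<tau> \<in> K)"

text \<open>Facets of the cyclic polytope C_{d+1}(n) on vertices 1..n (Gale evenness).\<close>
definition cyclic_facets :: "nat \<Rightarrow> nat \<Rightarrow> nat set set" where
  "cyclic_facets d n = {f. f \<subseteq> {1..n} \<and> card f = d + 1 \<and>
     (\<forall>i\<in>{1..n}. \<forall>j\<in>{1..n}. i < j \<and> i \<notin> f \<and> j \<notin> f \<longrightarrow>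
        even (card {k\<in>f. i < k \<and> k < j}))}"

definition cyclic_boundary :: "nat \<Rightarrow> nat \<Rightarrow> nat set set" where
  "cyclic_boundary d n = {\<sigma>. \<exists>f\<in>cyclic_facets d n. \<sigma> \<subseteq> f}"

definition facets :: "'a set set \<Rightarrow> 'a set set" where
  "facets K = {\<sigma>\<in>K. \<forall>\<tau>\<in>K. \<sigma> \<subseteq> \<tau> \<longrightarrow> \<tau> = \<sigma>}"

definition stellar :: "'a set set \<Rightarrow> 'a set \<Rightarrow> 'a \<Rightarrow> 'a set set" where
  "stellar K \<sigma> v = (K - {\<tau>\<in>K. \<sigma> \<subseteq> \<tau>}) \<union>
     {insert v (\<alpha> \<union> \<rho>) | \<alpha> \<rho>. \<alpha> \<subset> \<sigma> \<and> \<rho> \<in> K \<and> \<rho> \<inter> \<sigma> = {} \<and> \<rho> \<union> \<sigma> \<in> K}"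

definition stellar_step :: "nat set set \<Rightarrow> nat set set \<Rightarrow> bool" where
  "stellar_step K L \<longleftrightarrow> simplicial_complex K \<and>
     ((\<exists>\<sigma> v. \<sigma> \<in> K \<and> \<sigma> \<noteq> {} \<and> v \<notin> \<Union>K \<and> L = stellar K \<sigma> v) \<or>
      (\<exists>f. inj_on f (\<Union>K) \<and> L = (\<lambda>\<sigma>. f ` \<sigma>) ` K))"

text \<open>PL homeomorphism of finite simplicial complexes = stellar equivalence
  (Alexander--Newman): equivalence closure of stellar subdivisions and isomorphisms.\<close>
definition pl_homeomorphic :: "nat set set \<Rightarrow> nat set set \<Rightarrow> bool" where
  "pl_homeomorphic = (\<lambda>K L. stellar_step K L \<or> stellar_step L K)\<^sup>*\<^sup>*"

definition PL_ball :: "nat \<Rightarrow> nat set set \<Rightarrow> bool" where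
  "PL_ball d B \<longleftrightarrow> simplicial_complex B \<and> pl_homeomorphic B (Pow {0..d})"

definition PL_sphere :: "nat \<Rightarrow> nat set set \<Rightarrow> bool" where
  "PL_sphere d K \<longleftrightarrow> simplicial_complex K \<and> pl_homeomorphic K (Pow {0..d+1} - {{0..d+1}})"

definition bdry :: "nat \<Rightarrow> 'a set set \<Rightarrow> 'a set set" where
  "bdry d B = {\<sigma>. \<exists>\<rho>\<in>B. \<sigma> \<subseteq> \<rho> \<and> card \<rho> = d \<and>
      card {f\<in>B. card f = d + 1 \<and> \<rho> \<subseteq> f} = 1}"

definition join :: "'a set set \<Rightarrow> 'a set set \<Rightarrow> 'a set set" where
  "join A B = {a \<union> b | a b. a \<in> A \<and> b \<in> B}"

definition neighborly_wrt :: "nat \<Rightarrow> 'a set \<Rightarrow> 'a set set \<Rightarrow> bool" where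
  "neighborly_wrt k V B \<longleftrightarrow> (\<forall>S. S \<subseteq> V \<and> card S = k \<longrightarrow> S \<in> B)"

text \<open>k-stacked d-ball: every face of dimension at most d-k-1 (i.e. at most
  d-k vertices) lies in the boundary.\<close>
definition stacked :: "nat \<Rightarrow> nat \<Rightarrow> 'a set set \<Rightarrow> bool" where
  "stacked d k B \<longleftrightarrow> (\<forall>\<sigma>\<in>B. card \<sigma> \<le> d - k \<longrightarrow> \<sigma> \<in> bdry d B)"

definition single_element_extension :: "nat \<Rightarrow> 'a set set \<Rightarrow> 'a set set \<Rightarrow> 'a \<Rightarrow> 'a set set" where
  "single_element_extension d K' B w = (K' - B) \<union> join (bdry d B) {{}, {w}}"

definition two_colorable :: "'a set set \<Rightarrow> bool" where
  "two_colorable H \<longleftrightarrow> (\<exists>c :: 'a \<Rightarrow> bool. \<forall>f\<in>H. \<exists>x\<in>f. \<exists>y\<in>f. c x \<noteq> c y)"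

end

theory Submission
  imports Defs
begin

(* Every facet of the extension is either a facet of C_{d+1}(n) outside B or the cone from w
  over a boundary ridge of B. Colour w like a set S of old vertices: it then suffices that
  each old facet outside B meets both S and its complement, and that no boundary ridge of B
  lies inside S. By Gale's evenness condition every facet contains two consecutive vertices,
  and a ridge with two interior vertices is never contained in one parity class; so the even
  vertices work unless d = 2 and n is even. Then take S = {1, n} if this edge is not in B.
  Otherwise stackedness puts it on the boundary of B, hence in a triangle {1, y, n} of B with
  y = 2 or y = n - 1, and S = the interior vertices of parity opposite to y works. *)

lemma bdry_face_in_facet:
  assumes "\<sigma> \<in> bdry d B"
  obtains f where "f \<in> B" "card f = d + 1" "\<sigma> \<subseteq> f"
proof -
  from assms obtain \<rho>
    where "\<sigma> \<subseteq> \<rho>" and one: "card {f\<in>B. card f = d + 1 \<and> \<rho> \<subseteq> f} = 1"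
    unfolding bdry_def by auto
  moreover have "{f\<in>B. card f = d + 1 \<and> \<rho> \<subseteq> f} \<noteq> {}"
    using one card.empty by (metis zero_neq_one)
  ultimately show thesis using that by blast
qed

lemma facets_single_element_extension:
  assumes "simplicial_complex B" "B \<subseteq> {\<sigma>. \<exists>g\<in>F. \<sigma> \<subseteq> g}"
    and "f \<in> facets (single_element_extension d {\<sigma>. \<exists>g\<in>F. \<sigma> \<subseteq> g} B w)"
  obtains "f \<in> F" "f \<notin> B" | \<rho> where "\<rho> \<in> B" "card \<rho> = d" "f = insert w \<rho>"
proof -
  let ?K = "single_element_extension d {\<sigma>. \<exists>g\<in>F. \<sigma> \<subseteq> g} B w"
  have fK: "f \<in> ?K" and fmax: "\<And>\<tau>. \<tau> \<in> ?K \<Longrightarrow> f \<subseteq> \<tau> \<Longrightarrow> \<tau> = f"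
    using assms(3) unfolding facets_def by auto
  consider "f \<in> {\<sigma>. \<exists>g\<in>F. \<sigma> \<subseteq> g} - B" | "f \<in> join (bdry d B) {{}, {w}}"
    using fK unfolding single_element_extension_def by blast
  then show thesis
  proof cases
    case 1
    then obtain g where g: "g \<in> F" "f \<subseteq> g" and "f \<notin> B" by blast
    then have "g \<notin> B" using assms(1) unfolding simplicial_complex_def by blast
    then have "g \<in> ?K" using g unfolding single_element_extension_def by blast
    then have "g = f" using fmax g(2) by blast
    then show thesis using that(1) g \<open>g \<notin> B\<close> by blast
  next
    case 2
    then obtain a b where ab: "f = a \<union> b" "a \<in> bdry d B" "b \<in> {{}, {w}}"
      unfolding join_def by blast
    then obtain \<rho> where \<rho>: "\<rho> \<in> B" "a \<subseteq> \<rho>" "card \<rho> = d"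
      "card {f\<in>B. card f = d + 1 \<and> \<rho> \<subseteq> f} = 1"
      unfolding bdry_def by auto
    then have "\<rho> \<in> bdry d B" unfolding bdry_def by (intro CollectI bexI[of _ \<rho>]) auto
    then have "\<rho> \<union> {w} \<in> join (bdry d B) {{}, {w}}" unfolding join_def by blast
    then have "insert w \<rho> \<in> ?K" unfolding single_element_extension_def by simp
    moreover have "f \<subseteq> insert w \<rho>" using ab \<rho>(2) by auto
    ultimately have "insert w \<rho> = f" using fmax by blast
    then show thesis using that(2) \<rho> by blast
  qed
qed

lemma two_colorable_facets_single_element_extension:
  assumes "simplicial_complex B" "B \<subseteq> {\<sigma>. \<exists>g\<in>F. \<sigma> \<subseteq> g}" "w \<notin> \<Union>F"
    and split_facets: "\<And>g. g \<in> F \<Longrightarrow> g \<notin> B \<Longrightarrow> g \<inter> S \<noteq> {} \<and> \<not> g \<subseteq> S"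
    and split_ridges:
      "\<And>\<rho> g. \<rho> \<in> B \<Longrightarrow> card \<rho> = d \<Longrightarrow> g \<in> F \<Longrightarrow> \<rho> \<subseteq> g \<Longrightarrow> \<not> \<rho> \<subseteq> S"
  shows "two_colorable (facets (single_element_extension d {\<sigma>. \<exists>g\<in>F. \<sigma> \<subseteq> g} B w))"
  unfolding two_colorable_def
proof (intro exI[of _ "\<lambda>x. x = w \<or> x \<in> S"] ballI)
  fix f assume f: "f \<in> facets (single_element_extension d {\<sigma>. \<exists>g\<in>F. \<sigma> \<subseteq> g} B w)"
  show "\<exists>x\<in>f. \<exists>y\<in>f. (x = w \<or> x \<in> S) \<noteq> (y = w \<or> y \<in> S)"
    using assms(1,2) f
  proof (cases rule: facets_single_element_extension)
    case 1
    then obtain y z where "y \<in> f" "y \<in> S" "z \<in> f" "z \<notin> S"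
      using split_facets[of f] by blast
    moreover have "z \<noteq> w" using \<open>z \<in> f\<close> \<open>f \<in> F\<close> assms(3) by blast
    ultimately show ?thesis by (intro bexI[of _ y] bexI[of _ z]) auto
  next
    case (2 \<rho>)
    then obtain g where "g \<in> F" "\<rho> \<subseteq> g" using assms(2) by blast
    then obtain z where "z \<in> \<rho>" "z \<notin> S" "z \<noteq> w"
      using 2 split_ridges[of \<rho> g] assms(3) by blast
    then show ?thesis using 2 by (intro bexI[of _ w] bexI[of _ z]) auto
  qed
qed

lemma cyclic_facetsD:
  assumes "g \<in> cyclic_facets d n"
  shows "g \<subseteq> {1..n}" "card g = d + 1" "finite g"
    and "\<lbrakk>1 \<le> i; i < j; j \<le> n; i \<notin> g; j \<notin> g\<rbrakk> \<Longrightarrow> even (card {k\<in>g. i < k \<and> k < j})"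
  using assms unfolding cyclic_facets_def by (auto intro: finite_subset)

lemma cyclic_facet_gap_even:
  assumes "g \<in> cyclic_facets d n" "1 \<le> i" "i < j" "j \<le> n" "i \<notin> g" "j \<notin> g"
    and "{i<..<j} \<subseteq> g"
  shows "even (j - i - 1)"
proof -
  have "{k\<in>g. i < k \<and> k < j} = {i<..<j}" using assms(7) by auto
  then show ?thesis using cyclic_facetsD(4)[OF assms(1-6)] by simp
qed

lemma cyclic_facet_interior_neighbor:
  assumes "g \<in> cyclic_facets d n" "a \<in> g" "1 < a" "a < n"
  shows "a - 1 \<in> g \<or> a + 1 \<in> g"
proof (rule ccontr)
  assume "\<not> ?thesis"
  moreover have "{a - 1<..<a + 1} = {a}" using assms(3) by auto
  ultimately have "even (a + 1 - (a - 1) - 1)"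
    using assms by (intro cyclic_facet_gap_even[where g = g]) auto
  then show False using assms(3) by simp
qed

lemma cyclic_facet_end_vertex:
  assumes "g \<in> cyclic_facets d n" "even d" "1 < n"
  shows "1 \<in> g \<or> n \<in> g"
proof (rule ccontr)
  assume ends: "\<not> ?thesis"
  have "{k\<in>g. 1 < k \<and> k < n} = g"
    using ends cyclic_facetsD(1)[OF assms(1)] by (auto simp: subset_iff le_less)
  then show False
    using cyclic_facetsD(2)[OF assms(1)] cyclic_facetsD(4)[OF assms(1), of 1 n] assms(2,3) ends
    by simp
qed

lemma cyclic_facet_has_interior:
  assumes "g \<in> cyclic_facets d n" "2 \<le> d"
  obtains a where "a \<in> g" "1 < a" "a < n"
proof -
  have "\<not> g \<subseteq> {1, n}"
  proof
    assume "g \<subseteq> {1, n}"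
    then have "card g \<le> card {1, n}" by (intro card_mono) auto
    also have "\<dots> \<le> 2" by (simp add: card_insert_if)
    finally show False using cyclic_facetsD(2)[OF assms(1)] assms(2) by simp
  qed
  then obtain a where "a \<in> g" "a \<noteq> 1" "a \<noteq> n" by auto
  moreover have "a \<in> {1..n}" using \<open>a \<in> g\<close> cyclic_facetsD(1)[OF assms(1)] by auto
  ultimately show thesis using that by force
qed

lemma cyclic_facet_consecutive:
  assumes "g \<in> cyclic_facets d n" "2 \<le> d"
  obtains a where "a \<in> g" "a + 1 \<in> g"
proof -
  obtain a where a: "a \<in> g" "1 < a" "a < n" using cyclic_facet_has_interior[OF assms] .
  show thesis
  proof (cases "a - 1 \<in> g")
    case True
    then show thesis using that[of "a - 1"] a by simp
  next
    case False
    then show thesis using that[of a] a cyclic_facet_interior_neighbor[OF assms(1) a] by simp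
  qed
qed

lemma cyclic_facet_interior_same_parity:
  assumes g: "g \<in> cyclic_facets d n"
    and par: "\<And>c. c \<in> g \<Longrightarrow> 1 < c \<Longrightarrow> c < n \<Longrightarrow> even c = e"
  shows "g \<subseteq> {1, 2, n - 1, n}"
proof
  fix c assume c: "c \<in> g"
  then have "1 \<le> c" "c \<le> n" using cyclic_facetsD(1)[OF g] by auto
  show "c \<in> {1, 2, n - 1, n}"
  proof (cases "1 < c \<and> c < n")
    case True
    have "c - 1 = 1" if "c - 1 \<in> g"
    proof (rule ccontr)
      assume "c - 1 \<noteq> 1"
      then have "even (c - 1) = e" using par[OF that] True by fastforce
      then show False using par[OF c] True by (cases c) auto
    qed
    moreover have "c + 1 = n" if "c + 1 \<in> g"
    proof (rule ccontr)
      assume "c + 1 \<noteq> n"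
      then have "even (c + 1) = e" using par[OF that] True by fastforce
      then show False using par[OF c] True by auto
    qed
    ultimately show ?thesis using cyclic_facet_interior_neighbor[OF g c] True by auto
  next
    case False
    then show ?thesis using \<open>1 \<le> c\<close> \<open>c \<le> n\<close> by auto
  qed
qed

lemma cyclic_ridge_mixed_parity:
  assumes g: "g \<in> cyclic_facets d n" and "\<rho> \<subseteq> g" "card \<rho> = d"
    and two: "2 \<le> card (\<rho> \<inter> {1<..<n})"
  shows "\<exists>y\<in>\<rho>. even y \<noteq> e"
proof (rule ccontr)
  assume "\<not> ?thesis"
  then have par: "\<And>y. y \<in> \<rho> \<Longrightarrow> even y = e" by blast
  have "finite (\<rho> \<inter> {1<..<n})" "\<not> card (\<rho> \<inter> {1<..<n}) \<le> Suc 0"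
    using two card.infinite by fastforce+
  then obtain a b where "a \<in> \<rho> \<inter> {1<..<n}" "b \<in> \<rho> \<inter> {1<..<n}" "a \<noteq> b"
    using card_le_Suc0_iff_eq by blast
  then obtain a b where ab: "a \<in> \<rho>" "b \<in> \<rho>" "1 < a" "a < b" "b < n"
  proof (cases "a < b")
    case True
    then show thesis using that[of a b] \<open>a \<in> _\<close> \<open>b \<in> _\<close> by auto
  next
    case False
    then show thesis using that[of b a] \<open>a \<in> _\<close> \<open>b \<in> _\<close> \<open>a \<noteq> b\<close> by auto
  qed
  have "card (g - \<rho>) = 1"
    using assms(2,3) cyclic_facetsD(2,3)[OF g] by (simp add: card_Diff_subset finite_subset)
  then obtain x where g_eq: "g = insert x \<rho>"
    using assms(2) card_1_singleton_iff[of "g - \<rho>"] by auto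
  have off: "y = x" if "y \<in> g" "even y \<noteq> e" for y
    using that par g_eq by blast
  \<comment> \<open>Both a and b need x as a neighbour, so g has the odd block a, a + 1, a + 2.\<close>
  have "a - 1 \<in> g \<or> a + 1 \<in> g"
    using cyclic_facet_interior_neighbor[OF g subsetD[OF assms(2) ab(1)]] ab by simp
  moreover have "even (a - 1) \<noteq> e" "even (a + 1) \<noteq> e" using par[OF ab(1)] ab(3) by auto
  ultimately have "x = a - 1 \<or> x = a + 1" using off by blast
  have "b - 1 \<in> g \<or> b + 1 \<in> g"
    using cyclic_facet_interior_neighbor[OF g subsetD[OF assms(2) ab(2)]] ab by simp
  moreover have "even (b - 1) \<noteq> e" "even (b + 1) \<noteq> e" using par[OF ab(2)] ab(3,4) by auto
  ultimately have "x = b - 1 \<or> x = b + 1" using off by blast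
  with \<open>x = a - 1 \<or> x = a + 1\<close> have x: "x = a + 1" and b: "b = a + 2"
    using ab(3,4) by (elim disjE; simp)+
  have "a - 1 \<notin> g" using off[of "a - 1"] x \<open>even (a - 1) \<noteq> e\<close> by auto
  moreover have "a + 3 \<notin> g" using off[of "a + 3"] x par[OF ab(1)] by auto
  moreover have "{a - 1<..<a + 3} = {a, a + 1, a + 2}" using ab(3) by auto
  then have "{a - 1<..<a + 3} \<subseteq> g" using ab(1,2) b x g_eq by simp
  ultimately have "even (a + 3 - (a - 1) - 1)"
    using ab(3,5) b by (intro cyclic_facet_gap_even[OF g]) simp_all
  then show False using ab(3) by simp
qed

lemma cyclic_boundary_card_facet:
  assumes "t \<in> cyclic_boundary d n" "card t = d + 1"
  shows "t \<in> cyclic_facets d n"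
proof -
  obtain g where g: "g \<in> cyclic_facets d n" "t \<subseteq> g"
    using assms(1) unfolding cyclic_boundary_def by blast
  then have "t = g" using assms(2) cyclic_facetsD(2,3)[OF g(1)] by (intro card_subset_eq) auto
  then show ?thesis using g(1) by simp
qed

lemma cyclic_triangle_through_ends:
  assumes "t \<in> cyclic_facets 2 n" "{1, n} \<subseteq> t"
  obtains y where "t = {1, y, n}" "y = 2 \<or> y = n - 1" "1 < y" "y < n"
proof -
  obtain y where y: "y \<in> t" and y_int: "1 < y" "y < n"
    using cyclic_facet_has_interior[OF assms(1)] by auto
  have "card {1, y, n} = 3" using y_int by simp
  then have t: "t = {1, y, n}"
    using y assms cyclic_facetsD(2,3)[OF assms(1)] by (intro card_subset_eq[symmetric]) auto
  have "t \<subseteq> {1, 2, n - 1, n}"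
    using t by (intro cyclic_facet_interior_same_parity[OF assms(1), of "even y"]) auto
  then have "y = 2 \<or> y = n - 1" using t y_int by auto
  then show thesis using that t y_int by blast
qed

lemma two_colorable_cyclic_extension:
  assumes "simplicial_complex B" "B \<subseteq> cyclic_boundary d n" "w \<notin> {1..n}"
    and "\<And>g. g \<in> cyclic_facets d n \<Longrightarrow> g \<notin> B \<Longrightarrow> g \<inter> S \<noteq> {} \<and> \<not> g \<subseteq> S"
    and "\<And>\<rho> g. \<rho> \<in> B \<Longrightarrow> card \<rho> = d \<Longrightarrow> g \<in> cyclic_facets d n \<Longrightarrow> \<rho> \<subseteq> g \<Longrightarrow>
      \<not> \<rho> \<subseteq> S"
  shows "two_colorable (facets (single_element_extension d (cyclic_boundary d n) B w))"
proof -
  have "w \<notin> \<Union>(cyclic_facets d n)" using assms(3) cyclic_facetsD(1) by blast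
  then show ?thesis
    using assms(2) unfolding cyclic_boundary_def
    by (intro two_colorable_facets_single_element_extension[OF assms(1), where S = S] assms(4,5))
qed

lemma two_colorable_cyclic_extension_parity:
  assumes "simplicial_complex B" "B \<subseteq> cyclic_boundary d n" "w \<notin> {1..n}"
    and "2 \<le> d" "3 \<le> d \<or> odd n"
  shows "two_colorable (facets (single_element_extension d (cyclic_boundary d n) B w))"
proof (rule two_colorable_cyclic_extension[OF assms(1-3), where S = "Collect even"])
  fix g assume "g \<in> cyclic_facets d n"
  then obtain a where a: "a \<in> g" "a + 1 \<in> g"
    using cyclic_facet_consecutive[OF _ assms(4)] by blast
  obtain y z where "y \<in> g" "even y" "z \<in> g" "odd z"
  proof (cases "even a")
    case True
    then show thesis using that[of a "a + 1"] a by simp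
  next
    case False
    then show thesis using that[of "a + 1" a] a by simp
  qed
  then show "g \<inter> Collect even \<noteq> {} \<and> \<not> g \<subseteq> Collect even" by blast
next
  fix \<rho> g assume \<rho>: "\<rho> \<in> B" "card \<rho> = d" and g: "g \<in> cyclic_facets d n" "\<rho> \<subseteq> g"
  show "\<not> \<rho> \<subseteq> Collect even"
  proof
    assume ev: "\<rho> \<subseteq> Collect even"
    have fin: "finite \<rho>" using g cyclic_facetsD(3) finite_subset by blast
    have "\<rho> - {n} \<subseteq> \<rho> \<inter> {1<..<n}"
    proof
      fix y assume y: "y \<in> \<rho> - {n}"
      then have "1 \<le> y" "y \<le> n" "y \<noteq> n" "even y"
        using ev g cyclic_facetsD(1)[OF g(1)] by auto
      then have "1 < y" "y < n" by (auto simp: le_less)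
      then show "y \<in> \<rho> \<inter> {1<..<n}" using y by simp
    qed
    moreover have "2 \<le> card (\<rho> - {n})"
    proof (cases "3 \<le> d")
      case True
      then show ?thesis using \<rho>(2) by (auto simp: card_Diff_singleton_if)
    next
      case False
      then have "n \<notin> \<rho>" using assms(5) ev by auto
      then show ?thesis using \<rho>(2) assms(4) by simp
    qed
    ultimately have "2 \<le> card (\<rho> \<inter> {1<..<n})"
      using card_mono[of "\<rho> \<inter> {1<..<n}" "\<rho> - {n}"] fin by simp
    then obtain y where "y \<in> \<rho>" "odd y"
      using cyclic_ridge_mixed_parity[OF g \<rho>(2), of True] by auto
    then show False using ev by auto
  qed
qed

lemma two_colorable_cyclic_extension_ends:
  assumes "simplicial_complex B" "B \<subseteq> cyclic_boundary d n" "w \<notin> {1..n}"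
    and "even d" "2 \<le> d" "1 < n" "{1, n} \<notin> B"
  shows "two_colorable (facets (single_element_extension d (cyclic_boundary d n) B w))"
proof (rule two_colorable_cyclic_extension[OF assms(1-3), where S = "{1, n}"])
  fix g assume g: "g \<in> cyclic_facets d n"
  have "card {1, n} = 2" using assms(6) by simp
  then have "\<not> g \<subseteq> {1, n}"
    using card_mono[of "{1, n}" g] cyclic_facetsD(2)[OF g] assms(5) by auto
  then show "g \<inter> {1, n} \<noteq> {} \<and> \<not> g \<subseteq> {1, n}"
    using cyclic_facet_end_vertex[OF g assms(4,6)] by blast
next
  fix \<rho> g assume \<rho>: "\<rho> \<in> B" "card \<rho> = d"
  show "\<not> \<rho> \<subseteq> {1, n}"
  proof
    assume "\<rho> \<subseteq> {1, n}"
    moreover have "card {1, n} = d"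
      using card_mono[OF _ \<open>\<rho> \<subseteq> {1, n}\<close>] \<rho>(2) assms(5,6) by simp
    ultimately have "\<rho> = {1, n}" using \<rho>(2) by (intro card_subset_eq) auto
    then show False using \<rho>(1) assms(7) by simp
  qed
qed

lemma two_colorable_cyclic_extension_triangle:
  assumes "simplicial_complex B" "B \<subseteq> cyclic_boundary 2 n" "w \<notin> {1..n}"
    and "even n" "t \<in> B" "card t = 3" "{1, n} \<subseteq> t"
  shows "two_colorable (facets (single_element_extension 2 (cyclic_boundary 2 n) B w))"
proof -
  have "t \<in> cyclic_facets 2 n" using assms(2,5,6) cyclic_boundary_card_facet by auto
  then obtain y where t: "t = {1, y, n}" and y: "y = 2 \<or> y = n - 1" "1 < y" "y < n"
    using assms(7) cyclic_triangle_through_ends by blast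
  let ?S = "{c. 1 < c \<and> c < n \<and> even c \<noteq> even y}"
  show ?thesis
  proof (rule two_colorable_cyclic_extension[OF assms(1-3), where S = ?S])
    fix g assume g: "g \<in> cyclic_facets 2 n" "g \<notin> B"
    have "\<not> g \<subseteq> ?S" using cyclic_facet_end_vertex[OF g(1)] y by auto
    moreover have "g \<inter> ?S \<noteq> {}"
    proof
      assume "g \<inter> ?S = {}"
      then have par: "\<And>c. c \<in> g \<Longrightarrow> 1 < c \<Longrightarrow> c < n \<Longrightarrow> even c = even y" by blast
      have "g \<subseteq> {1, y, n}"
      proof
        fix c assume c: "c \<in> g"
        have "c \<in> {1, 2, n - 1, n}"
          using cyclic_facet_interior_same_parity[OF g(1) par] c by blast
        moreover have "odd (n - 1)" using assms(4) y by simp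
        ultimately show "c \<in> {1, y, n}" using par[OF c] y by (auto simp: less_diff_conv)
      qed
      moreover have "card {1, y, n} = card g" using y cyclic_facetsD(2)[OF g(1)] by simp
      ultimately have "g = t" using t by (intro card_subset_eq) auto
      then show False using g(2) assms(5) by simp
    qed
    ultimately show "g \<inter> ?S \<noteq> {} \<and> \<not> g \<subseteq> ?S" by blast
  next
    fix \<rho> g assume \<rho>: "\<rho> \<in> B" "card \<rho> = 2" and g: "g \<in> cyclic_facets 2 n" "\<rho> \<subseteq> g"
    show "\<not> \<rho> \<subseteq> ?S"
    proof
      assume \<rho>S: "\<rho> \<subseteq> ?S"
      then have "\<rho> \<inter> {1<..<n} = \<rho>" by auto
      then obtain z where "z \<in> \<rho>" "even z = even y"
        using cyclic_ridge_mixed_parity[OF g \<rho>(2), of "\<not> even y"] \<rho>(2) by auto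
      then show False using \<rho>S by auto
    qed
  qed
qed

theorem proposition3p6:
  fixes d n w :: nat and B :: "nat set set"
  assumes "d \<ge> 2" and "n \<ge> d + 2" and "w \<notin> {1..n}"
    and "B \<subseteq> cyclic_boundary d n"
    and "PL_ball d B"
    and "neighborly_wrt ((d + 1) div 2 - 1) {1..n} B"
    and "stacked d ((d + 1) div 2 - 1) B"
  shows "two_colorable (facets (single_element_extension d (cyclic_boundary d n) B w))"
proof -
  have sc: "simplicial_complex B" using assms(5) unfolding PL_ball_def by blast
  show ?thesis
  proof (cases "3 \<le> d \<or> odd n")
    case True
    then show ?thesis using two_colorable_cyclic_extension_parity[OF sc assms(4,3,1)] by blast
  next
    case False
    then have d: "d = 2" and "even n" using assms(1) by auto
    show ?thesis
    proof (cases "{1, n} \<in> B")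
      case False
      then show ?thesis
        using two_colorable_cyclic_extension_ends[OF sc assms(4,3)] d assms(2) by simp
    next
      case True
      moreover have "card {1, n} \<le> d" using d by (simp add: card_insert_if)
      ultimately have "{1, n} \<in> bdry d B" using assms(7) d unfolding stacked_def by simp
      then obtain t where "t \<in> B" "card t = d + 1" "{1, n} \<subseteq> t"
        by (rule bdry_face_in_facet)
      then show ?thesis
        using two_colorable_cyclic_extension_triangle[OF sc _ assms(3) \<open>even n\<close>] assms(4) d
        by simp
    qed
  qed
qed

end
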